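(* Let $L\subset\mathbb{R}^n$ be an $n$-dimensional lattice with basis $b_1,\dots,b_n$, and let $P$ be a Delaunay polytope of $L$ with vertex set $V(P)$ that generates $L$ (i.e. $L$ is the lattice generated by the differences of vertices of $P$). Fix a vertex $v_0\in V(P)$ and, for each $v\in V(P)$, write $v-v_0=\sum_{i=1}^n z_i(v)b_i$ with $z_i(v)\in\mathbb{Z}$. Let $$Y(P)=\Big\{y\in\mathbb{Z}^{V(P)}:\ \sum_{v\in V(P)}y(v)v=0,\ \sum_{v\in V(P)}y(v)=0\Big\}$$ and let $\mathcal{B}(P)$ be the linear space of symmetric real $n\times n$ matrices $(b_{ij})$ satisfying $$\sum_{i,j=1}^n\Big(\sum_{v\in V(P)}y(v)z_i(v)z_j(v)\Big)b_{ij}=0\qquad\text{for all }y\in Y(P).$$ Then $\dim\mathcal{B}(P)$ equals the rank of $P$.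
   Context: A Delaunay polytope of a lattice $L\subset\mathbb{R}^n$ is a polytope whose vertex set is $L\cap S$, where $S=S(c,r)$ is an empty sphere: $\|a-c\|^2\ge r^2$ for all $a\in L$, and $S\cap L$ contains $n+1$ affinely independent points. For a finite set $V$, the hypermetric cone $HYP(V)$ is the set of functions $d:V\times V\to\mathbb{R}$ with $d(u,v)=d(v,u)$, $d(v,v)=0$, and $\sum_{u,v\in V}b_ub_v d(u,v)\le 0$ for all $b\in\mathbb{Z}^V$ with $\sum_v b_v=1$. For a Delaunay polytope $P$, the distance $d_P(u,v)=\|u-v\|^2$ on $V=V(P)$ lies in $HYP(V)$; the rank of $P$ is the dimension of the minimal (by inclusion) face of $HYP(V(P))$ containing $d_P$. *)

theory Defs
  imports "HOL-Analysis.Analysis"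
begin

definition lattice_of_basis :: "('n::finite \<Rightarrow> real^'n) \<Rightarrow> (real^'n) set" where
  "lattice_of_basis b = {(\<Sum>i\<in>UNIV. of_int (z i) *\<^sub>R b i) | z. True}"

definition int_span :: "'a::real_vector set \<Rightarrow> 'a set" where
  "int_span X = {(\<Sum>x\<in>F. of_int (k x) *\<^sub>R x) | F k. finite F \<and> F \<subseteq> X}"

definition delaunay_polytope_vertices :: "(real^'n::finite) set \<Rightarrow> (real^'n) set \<Rightarrow> bool" where
  "delaunay_polytope_vertices L V \<longleftrightarrow>
     (\<exists>c r. (\<forall>a\<in>L. (norm (a - c))\<^sup>2 \<ge> r\<^sup>2) \<and>
            V = {a\<in>L. (norm (a - c))\<^sup>2 = r\<^sup>2} \<and>
            (\<exists>S\<subseteq>V. card S = CARD('n) + 1 \<and> \<not> affine_dependent S))"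

text \<open>Hypermetric cone HYP(V) for a finite index set V (given as a finite type 'v);
  a function d : V \<times> V \<Rightarrow> real is represented as a matrix d$u$v.\<close>
definition hyp_cone :: "(real^'v::finite^'v) set" where
  "hyp_cone = {d. (\<forall>u v. d$u$v = d$v$u) \<and> (\<forall>v. d$v$v = 0) \<and>
      (\<forall>bb::'v \<Rightarrow> int. sum bb UNIV = 1 \<longrightarrow>
          (\<Sum>u\<in>UNIV. \<Sum>v\<in>UNIV. of_int (bb u * bb v) * d$u$v) \<le> 0)}"

definition minimal_face :: "'a::real_vector set \<Rightarrow> 'a \<Rightarrow> 'a set" where
  "minimal_face S x = (THE F. F face_of S \<and> x \<in> F \<and> (\<forall>G. G face_of S \<and> x \<in> G \<longrightarrow> F \<subseteq> G))"

definition delaunay_distance :: "('v::finite \<Rightarrow> real^'n::finite) \<Rightarrow> real^'v^'v" where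
  "delaunay_distance vert = (\<chi> u v. (norm (vert u - vert v))\<^sup>2)"

definition delaunay_rank :: "('v::finite \<Rightarrow> real^'n::finite) \<Rightarrow> nat" where
  "delaunay_rank vert = dim (minimal_face hyp_cone (delaunay_distance vert))"

end

theory Submission
  imports Defs
begin

(*
  Let form_distance B be the function (u, v) \<mapsto> (z(u) - z(v))' B (z(u) - z(v)) on the vertices.
  The proof shows that form_distance maps B(P) injectively onto the linear span of the minimal face
  of HYP containing d_P.

  That face lies in the face F cut out by the hypermetric inequalities tight at d_P, and the
  inequality for b is tight exactly when the lattice point \<Sum> b(v) v lies on the empty sphere. For
  d \<in> F and y \<in> Y(P) the weights e_x \<plusminus> y are tight, which forces every row of d to be orthogonal
  to Y(P). As the coordinates z(v) are integral and contain an affine basis, a function orthogonal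
  to Y(P) is affine in z(v) (Cramer's rule produces the integral dependencies). Hence d is
  biaffine, and a symmetric biaffine function vanishing on the diagonal is form_distance B with
  B \<in> B(P).

  Conversely, for B \<in> B(P) the quadratic form of B is affine on the vertices, so the hypermetric
  functional of form_distance B at b is twice "affine minus quadratic" at the barycentre of b: it
  vanishes for tight b and grows at most linearly in the power of \<Sum> b(v) v with respect to the
  sphere. By discreteness of the lattice these powers are 0 or bounded away from 0, so
  d_P \<plusminus> \<epsilon> form_distance B \<in> HYP for small \<epsilon>. Injectivity holds because the edge vectors
  z(sg k) - z(s0) form a basis.
*)

section \<open>Quadratic forms\<close>

definition quad_form :: "real^'n^'n \<Rightarrow> real^'n \<Rightarrow> real" where
  "quad_form B x = x \<bullet> (B *v x)"

lemma quad_form_add: "quad_form (A + B) x = quad_form A x + quad_form B x"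
  by (simp add: quad_form_def matrix_vector_mult_add_rdistrib inner_add_right)

lemma quad_form_scaleR: "quad_form (a *\<^sub>R B) x = a * quad_form B x"
  by (simp add: quad_form_def vec_eq_iff matrix_vector_mult_def sum_distrib_left mult_ac inner_vec_def)

lemma quad_form_0_left [simp]: "quad_form 0 x = 0"
  by (simp add: quad_form_def)

lemma quad_form_0_right [simp]: "quad_form B 0 = 0"
  by (simp add: quad_form_def)

lemma quad_form_minus: "quad_form B (- x) = quad_form B x"
  using matrix_vector_mult_diff_distrib[of B 0 x] by (simp add: quad_form_def)

lemma quad_form_mat_1: "quad_form (mat 1) x = (norm x)\<^sup>2"
  by (simp add: quad_form_def power2_norm_eq_inner)

lemma inner_transpose_matrix: "x \<bullet> (transpose M *v y) = (M *v x) \<bullet> (y::real^'n)"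
  by (simp add: dot_lmul_matrix[symmetric] inner_commute)

lemma inner_symmetric_matrix:
  assumes "transpose B = B"
  shows "x \<bullet> (B *v y) = y \<bullet> ((B::real^'n^'n) *v x)"
  using inner_transpose_matrix[of x B y] assms by (simp add: inner_commute)

lemma quad_form_diff:
  assumes "transpose B = B"
  shows "quad_form B (x - y) = quad_form B x + quad_form B y - 2 * (x \<bullet> (B *v y))"
  using inner_symmetric_matrix[OF assms, of x y]
  by (simp add: quad_form_def matrix_vector_mult_diff_distrib inner_diff_left inner_diff_right)

lemma quad_form_congruence: "quad_form (transpose M ** B ** M) x = quad_form B (M *v x)"
proof -
  have "(transpose M ** B ** M) *v x = transpose M *v (B *v (M *v x))"
    by (metis matrix_vector_mul_assoc)
  then show ?thesis
    unfolding quad_form_def by (simp only: inner_transpose_matrix)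
qed

lemma congruence_entry: "(transpose A ** B ** A) $ k $ l = column k A \<bullet> (B *v column l A)"
proof -
  have "column k A \<bullet> (B *v column l A) = (\<Sum>i\<in>UNIV. \<Sum>j\<in>UNIV. A$i$k * B$i$j * A$j$l)"
    by (simp add: inner_vec_def matrix_vector_mult_def column_def sum_distrib_left mult_ac)
  also have "\<dots> = (\<Sum>j\<in>UNIV. \<Sum>i\<in>UNIV. A$i$k * B$i$j * A$j$l)"
    by (rule sum.swap)
  also have "\<dots> = (transpose A ** B ** A) $ k $ l"
    by (simp add: matrix_matrix_mult_def transpose_def sum_distrib_right sum_distrib_left mult_ac)
  finally show ?thesis
    by simp
qed

lemma symmetric_congruence:
  "transpose (B::real^'n^'n) = B \<Longrightarrow> transpose (transpose M ** B ** M) = transpose M ** B ** M"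
  by (simp add: matrix_transpose_mul matrix_mul_assoc)

lemma symmetric_biaffine_eq_quad_form:
  fixes p :: "'v \<Rightarrow> real^'n"
  assumes biaffine: "\<And>w u. f w u = \<alpha> + a \<bullet> p w + c \<bullet> p u + p w \<bullet> (D *v p u)"
    and sym: "\<And>w u. f w u = f u w" and diag: "\<And>w. f w w = 0"
  shows "f w u = quad_form ((- 1 / 4) *\<^sub>R (D + transpose D)) (p w - p u)"
proof -
  define S where "S = D + transpose D"
  have S_sym: "transpose S = S"
    by (simp add: S_def transpose_def vec_eq_iff add.commute)
  have S_inner: "x \<bullet> (S *v y) = x \<bullet> (D *v y) + y \<bullet> (D *v x)" for x y
    using inner_transpose_matrix[of x D y]
    by (simp add: S_def matrix_vector_mult_add_rdistrib inner_add_right inner_commute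
        del: transpose_matrix_vector)
  have two_f: "2 * f w u = 2 * \<alpha> + a \<bullet> p w + a \<bullet> p u + c \<bullet> p w + c \<bullet> p u
      + p w \<bullet> (S *v p u)" for w u
    using biaffine[of w u] biaffine[of u w] sym[of w u] S_inner[of "p w" "p u"]
    by simp
  have "4 * f w u = 2 * (2 * f w u) - 2 * f w w - 2 * f u u"
    using diag by simp
  also have "\<dots> = - quad_form S (p w - p u)"
    unfolding two_f quad_form_diff[OF S_sym] unfolding quad_form_def by (simp add: algebra_simps)
  finally show ?thesis
    unfolding quad_form_scaleR S_def[symmetric] by linarith
qed

section \<open>The hypermetric cone and its faces\<close>

definition hyp_form :: "('v::finite \<Rightarrow> real) \<Rightarrow> real^'v^'v \<Rightarrow> real" where
  "hyp_form \<beta> d = (\<Sum>u\<in>UNIV. \<Sum>v\<in>UNIV. \<beta> u * \<beta> v * d$u$v)"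

lemma mem_hyp_cone_iff:
  "d \<in> hyp_cone \<longleftrightarrow> (\<forall>u v. d$u$v = d$v$u) \<and> (\<forall>v. d$v$v = 0) \<and>
     (\<forall>\<beta>::'v::finite \<Rightarrow> int. sum \<beta> UNIV = 1 \<longrightarrow> hyp_form (of_int \<circ> \<beta>) d \<le> 0)"
  by (simp add: hyp_cone_def hyp_form_def)

lemma hyp_form_eq_inner: "hyp_form \<beta> d = (\<chi> u v. \<beta> u * \<beta> v) \<bullet> d"
  by (simp add: hyp_form_def inner_vec_def)

lemma hyp_form_add: "hyp_form \<beta> (d + e) = hyp_form \<beta> d + hyp_form \<beta> e"
  by (simp add: hyp_form_eq_inner inner_add_right)

lemma hyp_form_scaleR: "hyp_form \<beta> (t *\<^sub>R d) = t * hyp_form \<beta> d"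
  by (simp add: hyp_form_eq_inner)

lemma convex_hyp_cone: "convex hyp_cone"
  unfolding convex_def
  by (auto simp: mem_hyp_cone_iff hyp_form_add hyp_form_scaleR intro!: add_nonpos_nonpos mult_nonneg_nonpos)

definition hyp_tight_face :: "real^'v::finite^'v \<Rightarrow> (real^'v^'v) set" where
  "hyp_tight_face d0 = {d \<in> hyp_cone. \<forall>\<beta>::'v \<Rightarrow> int.
      sum \<beta> UNIV = 1 \<and> hyp_form (of_int \<circ> \<beta>) d0 = 0 \<longrightarrow> hyp_form (of_int \<circ> \<beta>) d = 0}"

lemma mem_hyp_tight_face_self: "d0 \<in> hyp_cone \<Longrightarrow> d0 \<in> hyp_tight_face d0"
  by (simp add: hyp_tight_face_def)

lemma hyp_tight_face_face_of: "hyp_tight_face (d0 :: real^'v::finite^'v) face_of hyp_cone"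
proof -
  define H where "H \<beta> = hyp_cone \<inter> {d. (\<chi> u v. of_int (\<beta> u) * of_int (\<beta> v)) \<bullet> d = (0::real)}"
    for \<beta> :: "'v \<Rightarrow> int"
  have H_face: "H \<beta> face_of hyp_cone" if "sum \<beta> UNIV = 1" for \<beta>
    unfolding H_def using that
    by (intro face_of_Int_supporting_hyperplane_le convex_hyp_cone)
      (auto simp: mem_hyp_cone_iff hyp_form_eq_inner)
  have "hyp_tight_face d0 = \<Inter> (insert hyp_cone (H ` {\<beta>. sum \<beta> UNIV = 1 \<and> hyp_form (of_int \<circ> \<beta>) d0 = 0}))"
    by (auto simp: hyp_tight_face_def H_def hyp_form_eq_inner)
  also have "\<dots> face_of hyp_cone"
    by (rule face_of_Inter) (auto intro: H_face face_of_refl convex_hyp_cone)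
  finally show ?thesis .
qed

lemma hyp_form_quad_form_diff:
  fixes p :: "'v::finite \<Rightarrow> real^'n"
  assumes B: "transpose B = B" and \<beta>: "sum \<beta> UNIV = 1"
  shows "hyp_form \<beta> (\<chi> u v. quad_form B (p u - p v))
    = 2 * (\<Sum>u\<in>UNIV. \<beta> u * quad_form B (p u)) - 2 * quad_form B (\<Sum>u\<in>UNIV. \<beta> u *\<^sub>R p u)"
proof -
  let ?Q = "\<lambda>u. quad_form B (p u)"
  have square: "(\<Sum>u\<in>UNIV. \<Sum>v\<in>UNIV. \<beta> u * \<beta> v * ?Q u) = (\<Sum>u\<in>UNIV. \<beta> u * ?Q u)"
    using \<beta> by (simp add: mult.commute mult.left_commute flip: sum_distrib_left sum_distrib_right)
  have square': "(\<Sum>u\<in>UNIV. \<Sum>v\<in>UNIV. \<beta> u * \<beta> v * ?Q v) = (\<Sum>u\<in>UNIV. \<beta> u * ?Q u)"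
    using \<beta> by (simp add: mult.assoc flip: sum_distrib_left sum_distrib_right)
  have cross: "(\<Sum>u\<in>UNIV. \<Sum>v\<in>UNIV. \<beta> u * \<beta> v * (p u \<bullet> (B *v p v)))
      = quad_form B (\<Sum>u\<in>UNIV. \<beta> u *\<^sub>R p u)"
    by (simp add: quad_form_def linear_sum[OF matrix_vector_mul_linear] matrix_vector_mult_scaleR
        inner_sum_left inner_sum_right sum_distrib_left mult.assoc)
      (subst sum.swap, simp add: mult.left_commute)
  have "hyp_form \<beta> (\<chi> u v. quad_form B (p u - p v))
      = (\<Sum>u\<in>UNIV. \<Sum>v\<in>UNIV. \<beta> u * \<beta> v * ?Q u) + (\<Sum>u\<in>UNIV. \<Sum>v\<in>UNIV. \<beta> u * \<beta> v * ?Q v)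
        - 2 * (\<Sum>u\<in>UNIV. \<Sum>v\<in>UNIV. \<beta> u * \<beta> v * (p u \<bullet> (B *v p v)))"
    by (simp add: hyp_form_def quad_form_diff[OF B] algebra_simps sum.distrib sum_subtractf
        sum_distrib_left)
  then show ?thesis
    unfolding square square' cross by simp
qed

lemma hyp_form_sq_dist:
  fixes p :: "'v::finite \<Rightarrow> real^'n"
  assumes \<beta>: "sum \<beta> UNIV = 1"
  shows "hyp_form \<beta> (\<chi> u v. (norm (p u - p v))\<^sup>2)
    = 2 * (\<Sum>u\<in>UNIV. \<beta> u * (norm (p u - q))\<^sup>2) - 2 * (norm ((\<Sum>u\<in>UNIV. \<beta> u *\<^sub>R p u) - q))\<^sup>2"
proof -
  have "(\<Sum>u\<in>UNIV. \<beta> u *\<^sub>R (p u - q)) = (\<Sum>u\<in>UNIV. \<beta> u *\<^sub>R p u) - q"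
    using \<beta> by (simp add: scaleR_diff_right sum_subtractf flip: scaleR_sum_left)
  then show ?thesis
    using hyp_form_quad_form_diff[of "mat 1" \<beta> "\<lambda>u. p u - q"] \<beta>
    by (simp add: quad_form_mat_1)
qed

lemma hyp_form_point_mass_plus:
  "hyp_form (\<lambda>u. (if u = w then 1 else 0) + t * y u) d
     = d$w$w + t * (\<Sum>v\<in>UNIV. y v * d$w$v) + t * (\<Sum>u\<in>UNIV. y u * d$u$w) + t\<^sup>2 * hyp_form y d"
proof -
  let ?e = "\<lambda>u. if u = w then 1 else (0::real)"
  have expand: "(?e u + t * y u) * (?e v + t * y v) * d$u$v
     = ?e u * ?e v * d$u$v + t * (?e u * (y v * d$u$v)) + t * (?e v * (y u * d$u$v))
       + t\<^sup>2 * (y u * y v * d$u$v)" for u v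
    by (simp add: algebra_simps power2_eq_square)
  have if_sum: "(\<Sum>v\<in>UNIV. if P then f v else 0) = (if P then sum f UNIV else (0::real))" for P f
    by simp
  show ?thesis
    unfolding hyp_form_def expand
    by (simp add: sum.distrib if_distrib[of "\<lambda>x. x * _"] if_sum flip: sum_distrib_left cong: if_cong)
qed

lemma minimal_face_eq_Inter:
  assumes "F face_of S" "x \<in> F"
  shows "minimal_face S x = \<Inter> {G. G face_of S \<and> x \<in> G}"
  unfolding minimal_face_def
proof (rule the_equality)
  show "\<Inter> {G. G face_of S \<and> x \<in> G} face_of S \<and> x \<in> \<Inter> {G. G face_of S \<and> x \<in> G} \<and>
      (\<forall>G. G face_of S \<and> x \<in> G \<longrightarrow> \<Inter> {G. G face_of S \<and> x \<in> G} \<subseteq> G)"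
    using assms by (auto intro!: face_of_Inter)
qed blast

lemma dim_minimal_face:
  fixes S :: "'a::euclidean_space set"
  assumes F: "F face_of S" "x \<in> F" "F \<subseteq> W" and W: "subspace W"
    and perturb: "\<And>d. d \<in> W \<Longrightarrow> \<exists>e>0. x + e *\<^sub>R d \<in> S \<and> x - e *\<^sub>R d \<in> S"
  shows "dim (minimal_face S x) = dim W"
proof -
  let ?M = "minimal_face S x"
  have M: "?M face_of S" "x \<in> ?M" "?M \<subseteq> F"
    using minimal_face_eq_Inter[OF F(1,2)] F(1,2) by (auto intro!: face_of_Inter)
  have "W \<subseteq> span ?M"
  proof
    fix d assume "d \<in> W"
    then obtain e where e: "e > 0" "x + e *\<^sub>R d \<in> S" "x - e *\<^sub>R d \<in> S"
      using perturb by blast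
    show "d \<in> span ?M"
    proof (cases "d = 0")
      case False
      have "x = midpoint (x + e *\<^sub>R d) (x - e *\<^sub>R d)"
        by (simp add: midpoint_def algebra_simps flip: scaleR_add_left)
      moreover have "x + e *\<^sub>R d \<noteq> x - e *\<^sub>R d"
        using False e(1) by (simp add: algebra_simps flip: scaleR_add_left)
      ultimately have "x \<in> open_segment (x + e *\<^sub>R d) (x - e *\<^sub>R d)"
        by (metis midpoint_in_open_segment)
      then have "x + e *\<^sub>R d \<in> ?M"
        using face_ofD[OF M(1) _ e(2,3) M(2)] by blast
      then have "(1 / e) *\<^sub>R ((x + e *\<^sub>R d) - x) \<in> span ?M"
        using M(2) by (intro span_mul span_diff span_base)
      then show ?thesis
        using e(1) by simp
    qed (simp add: span_0)
  qed
  moreover have "span ?M \<subseteq> W"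
    using M(3) F(3) W by (intro span_minimal) auto
  ultimately have "span ?M = W"
    by blast
  then show ?thesis
    by (metis dim_span)
qed

section \<open>Affine bases and integer affine dependencies\<close>

lemma independent_range_lincomb_eq_0:
  fixes h :: "'i::finite \<Rightarrow> 'a::real_vector"
  assumes h: "inj h" "independent (range h)" and w: "(\<Sum>k\<in>UNIV. w k *\<^sub>R h k) = 0"
  shows "w k = 0"
proof -
  have "(\<Sum>x\<in>range h. w (inv h x) *\<^sub>R x) = 0"
    using w h(1) by (simp add: sum.reindex)
  then have "w (inv h (h k)) = 0"
    using h(2)[unfolded independent_explicit_finite_subsets, rule_format,
        OF subset_refl finite_imageI[OF finite], of "\<lambda>x. w (inv h x)"]
    by blast
  then show ?thesis
    using h(1) by simp
qed

lemma linear_basis_lincomb: "linear (\<lambda>x::real^'n::finite. \<Sum>i\<in>UNIV. x$i *\<^sub>R b i)"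
  by (rule linearI) (simp_all add: scaleR_add_left sum.distrib scaleR_sum_right)

lemma inj_basis_lincomb:
  fixes b :: "'n::finite \<Rightarrow> 'a::real_vector"
  assumes "independent (range b)" "inj b"
  shows "inj (\<lambda>x::real^'n. \<Sum>i\<in>UNIV. x$i *\<^sub>R b i)"
proof -
  have "x = 0" if "(\<Sum>i\<in>UNIV. x$i *\<^sub>R b i) = 0" for x :: "real^'n"
    using independent_range_lincomb_eq_0[OF assms(2,1) that] by (simp add: vec_eq_iff)
  then show ?thesis
    by (simp add: linear_injective_0[OF linear_basis_lincomb])
qed

lemma invertible_if_independent_columns:
  fixes A :: "real^'n::finite^'n" and \<phi> :: "real^'n \<Rightarrow> 'a::real_vector"
  assumes \<phi>: "linear \<phi>" and h: "inj h" "independent (range h)"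
    and columns: "\<And>k. \<phi> (column k A) = h k"
  shows "invertible A"
proof -
  have "w = 0" if "A *v w = 0" for w
  proof -
    have "(\<Sum>k\<in>UNIV. w$k *\<^sub>R h k) = \<phi> (A *v w)"
      by (simp add: matrix_mult_sum scalar_mult_eq_scaleR linear_sum[OF \<phi>] linear_scale[OF \<phi>] columns)
    then show ?thesis
      using that independent_range_lincomb_eq_0[OF h] by (simp add: linear_0[OF \<phi>] vec_eq_iff)
  qed
  then show ?thesis
    by (simp add: invertible_left_inverse matrix_left_invertible_injective linear_injective_0
        matrix_vector_mul_linear)
qed

lemma invertible_coordinate_differences:
  fixes vert :: "'v \<Rightarrow> 'a::euclidean_space" and p :: "'v \<Rightarrow> real^'n::finite"
  assumes \<phi>: "linear \<phi>" and coords: "\<And>v. vert v - vert v0 = \<phi> (p v)"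
    and S: "S \<subseteq> range vert" "card S = CARD('n) + 1" "\<not> affine_dependent S"
  obtains s0 sg where "invertible ((\<chi> i k. p (sg k) $ i - p s0 $ i) :: real^'n^'n)"
proof -
  have "finite S" "S \<noteq> {}"
    using S(2) by (auto intro: card_ge_0_finite)
  then obtain p0 where p0: "p0 \<in> S"
    by blast
  have "card (UNIV::'n set) = card (S - {p0})"
    using S(2) p0 \<open>finite S\<close> by simp
  then obtain f where f: "bij_betw f (UNIV::'n set) (S - {p0})"
    using finite_same_card_bij[OF finite finite_Diff[OF \<open>finite S\<close>]] by blast
  obtain s0 where s0: "vert s0 = p0"
    using p0 S(1) by blast
  define sg where "sg k = inv vert (f k)" for k
  have sg: "vert (sg k) = f k" for k
    unfolding sg_def using bij_betwE[OF f] S(1) by (meson DiffD1 UNIV_I f_inv_into_f subsetD)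
  define h where "h k = - p0 + f k" for k
  have "inj h"
    using f by (auto simp: h_def bij_betw_def inj_on_def)
  have "range h = (\<lambda>x. - p0 + x) ` range f"
    by (simp add: h_def image_image)
  also have "range f = S - {p0}"
    using f by (simp add: bij_betw_def)
  moreover have "insert p0 (S - {p0}) = S"
    using p0 by blast
  ultimately have "independent (range h)"
    using S(3) affine_dependent_iff_dependent[of p0 "S - {p0}"] by simp
  have "column k (\<chi> i k. p (sg k) $ i - p s0 $ i) = p (sg k) - p s0" for k
    by (simp add: column_def vec_eq_iff)
  then have "\<phi> (column k (\<chi> i k. p (sg k) $ i - p s0 $ i)) = h k" for k
    by (simp add: linear_diff[OF \<phi>] h_def flip: coords sg s0)
  then show ?thesis
    by (intro that invertible_if_independent_columns[OF \<phi> \<open>inj h\<close> \<open>independent (range h)\<close>])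
qed

lemma det_Ints:
  fixes M :: "real^'n::finite^'n"
  assumes "\<And>i j. M$i$j \<in> \<int>"
  shows "det M \<in> \<int>"
  unfolding det_def using assms
  by (intro Ints_sum Ints_mult Ints_prod) auto

lemma det_mult_solution_Ints:
  fixes A :: "real^'n::finite^'n"
  assumes "\<And>i j. A$i$j \<in> \<int>" "\<And>i. (A *v x)$i \<in> \<int>"
  shows "det A * x$k \<in> \<int>"
  using cramer_lemma[where A = A and x = x and k = k]
    det_Ints[of "\<chi> i j. if j = k then (A *v x)$i else A$i$j"] assms
  by (simp add: mult.commute)

lemma invertible_matrix_inv:
  assumes "invertible A"
  shows "A ** matrix_inv A = mat 1" "matrix_inv A ** A = mat 1"
  using someI_ex[OF assms[unfolded invertible_def]] by (simp_all add: matrix_inv_def)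

lemma sum_point_masses:
  fixes w :: "'v::finite \<Rightarrow> 'a::real_vector"
  shows "(\<Sum>v\<in>UNIV. of_int ((if v = u then n else 0) - (\<Sum>k\<in>UNIV. if v = sg k then c k else 0)
            - (if v = s0 then n - sum c UNIV else 0)) *\<^sub>R w v)
       = of_int n *\<^sub>R (w u - w s0) - (\<Sum>k\<in>UNIV. of_int (c k) *\<^sub>R (w (sg k) - w s0))"
proof -
  have point_mass: "(\<Sum>v\<in>UNIV. of_int (if v = a then m else 0) *\<^sub>R w v) = of_int m *\<^sub>R w a" for a m
  proof -
    have "(\<Sum>v\<in>UNIV. of_int (if v = a then m else 0) *\<^sub>R w v)
        = (\<Sum>v\<in>UNIV. if v = a then of_int m *\<^sub>R w v else 0)"
      by (rule sum.cong) auto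
    then show ?thesis
      by simp
  qed
  have "(\<Sum>v\<in>UNIV. of_int (\<Sum>k\<in>UNIV. if v = sg k then c k else 0) *\<^sub>R w v)
      = (\<Sum>k\<in>UNIV. of_int (c k) *\<^sub>R w (sg k))"
    by (simp add: of_int_sum scaleR_sum_left if_distrib[of "\<lambda>x. of_int x *\<^sub>R _"] cong: if_cong)
      (subst sum.swap, simp)
  then show ?thesis
    by (simp add: point_mass scaleR_diff_left scaleR_diff_right sum_subtractf of_int_sum
        scaleR_sum_left sum.distrib algebra_simps)
qed

lemma orthogonal_integer_dependencies_imp_affine:
  fixes p :: "'v::finite \<Rightarrow> real^'n::finite" and g :: "'v \<Rightarrow> real" and A :: "real^'n^'n"
  assumes int: "\<And>v i. p v $ i \<in> \<int>"
    and A: "A = (\<chi> i k. p (sg k) $ i - p s0 $ i)" "invertible A"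
    and orth: "\<And>y::'v \<Rightarrow> int. sum y UNIV = 0 \<Longrightarrow> (\<Sum>v\<in>UNIV. of_int (y v) *\<^sub>R p v) = 0 \<Longrightarrow>
       (\<Sum>v\<in>UNIV. of_int (y v) * g v) = 0"
  shows "g u = g s0 + (matrix_inv A *v (p u - p s0)) \<bullet> (\<chi> k. g (sg k) - g s0)"
proof -
  define \<xi> where "\<xi> = matrix_inv A *v (p u - p s0)"
  have A_\<xi>: "A *v \<xi> = p u - p s0"
    by (simp add: \<xi>_def matrix_vector_mul_assoc invertible_matrix_inv[OF A(2)])
  have column_A: "column k A = p (sg k) - p s0" for k
    by (simp add: A(1) column_def vec_eq_iff)
  have A_int: "A$i$j \<in> \<int>" for i j
    by (simp add: A(1) int Ints_diff)
  obtain n where n: "det A = of_int n"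
    using det_Ints[OF A_int] Ints_cases by metis
  have "det A * \<xi>$k \<in> \<int>" for k
    using det_mult_solution_Ints[OF A_int] by (simp add: A_\<xi> int)
  then have "\<forall>k. \<exists>m. det A * \<xi>$k = of_int m"
    by (auto elim: Ints_cases)
  then obtain c where c: "\<And>k. det A * \<xi>$k = of_int (c k)"
    by metis
  \<comment> \<open>\<open>det A\<close> times the affine dependency \<open>p u = p s0 + \<Sum>k. \<xi>$k *\<^sub>R (p (sg k) - p s0)\<close>\<close>
  define y where "y v = (if v = u then n else 0) - (\<Sum>k\<in>UNIV. if v = sg k then c k else 0)
      - (if v = s0 then n - sum c UNIV else 0)" for v
  have "of_int (sum y UNIV) = (\<Sum>v\<in>UNIV. of_int (y v) *\<^sub>R (1::real))"
    by simp
  also have "\<dots> = 0"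
    unfolding y_def sum_point_masses by simp
  finally have "sum y UNIV = 0"
    by (simp flip: of_int_sum)
  moreover have "(\<Sum>v\<in>UNIV. of_int (y v) *\<^sub>R p v) = 0"
  proof -
    have "(\<Sum>k\<in>UNIV. of_int (c k) *\<^sub>R (p (sg k) - p s0)) = A *v (det A *\<^sub>R \<xi>)"
      by (simp add: matrix_mult_sum column_A c scalar_mult_eq_scaleR)
    then show ?thesis
      unfolding y_def sum_point_masses by (simp add: matrix_vector_mult_scaleR A_\<xi> flip: n)
  qed
  ultimately have "(\<Sum>v\<in>UNIV. of_int (y v) * g v) = 0"
    by (rule orth)
  then have "det A * (g u - g s0) = (\<Sum>k\<in>UNIV. of_int (c k) * (g (sg k) - g s0))"
    using sum_point_masses[of u n sg c s0 g] by (simp add: y_def n)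
  also have "\<dots> = det A * (\<xi> \<bullet> (\<chi> k. g (sg k) - g s0))"
    by (simp add: inner_vec_def sum_distrib_left mult.assoc flip: c)
  finally show ?thesis
    using A(2) by (simp add: \<xi>_def invertible_det_nz)
qed

section \<open>Lattice points near an empty sphere\<close>

lemma finite_lattice_points_in_ball:
  fixes b :: "'n::finite \<Rightarrow> real^'n"
  assumes inj: "inj (\<lambda>x::real^'n. \<Sum>i\<in>UNIV. x$i *\<^sub>R b i)"
  shows "finite {X \<in> lattice_of_basis b. norm X \<le> R}"
proof -
  define f where "f x = (\<Sum>i\<in>UNIV. x$i *\<^sub>R b i)" for x :: "real^'n"
  obtain m where m: "m > 0" "\<And>x. m * norm x \<le> norm (f x)"
    using linear_inj_bounded_below_pos[OF linear_basis_lincomb inj] unfolding f_def by blast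
  define N where "N = \<lceil>R / m\<rceil>"
  have "{X \<in> lattice_of_basis b. norm X \<le> R} \<subseteq> (\<lambda>z. f (\<chi> i. of_int (z i))) ` (Pi\<^sub>E UNIV (\<lambda>_. {-N..N}))"
  proof
    fix X assume X: "X \<in> {X \<in> lattice_of_basis b. norm X \<le> R}"
    then obtain z where z: "X = f (\<chi> i. of_int (z i))"
      by (auto simp: lattice_of_basis_def f_def)
    have "m * norm (\<chi> i. (of_int (z i)::real)) \<le> R"
      using m(2)[of "\<chi> i. of_int (z i)"] X z by simp
    then have "norm (\<chi> i. (of_int (z i)::real)) \<le> R / m"
      using m(1) by (simp add: field_simps)
    then have "\<bar>z i\<bar> \<le> N" for i
      using component_le_norm_cart[of "\<chi> i. (of_int (z i)::real)" i] unfolding N_def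
      by (simp flip: of_int_abs) (meson le_of_int_ceiling of_int_le_iff order_trans)
    then have "z i \<in> {-N..N}" for i
      by (simp add: abs_le_iff) (meson minus_le_iff)
    then have "z \<in> Pi\<^sub>E UNIV (\<lambda>_. {-N..N})"
      by (simp add: PiE_UNIV_domain)
    then show "X \<in> (\<lambda>z. f (\<chi> i. of_int (z i))) ` (Pi\<^sub>E UNIV (\<lambda>_. {-N..N}))"
      using z by blast
  qed
  then show ?thesis
    by (rule finite_subset) (intro finite_imageI finite_PiE; simp)
qed

lemma sphere_power_gap:
  fixes L :: "'a::real_normed_vector set"
  assumes fin: "\<And>R. finite {X \<in> L. norm X \<le> R}"
  obtains \<delta> where "\<delta> > 0" "\<And>X. X \<in> L \<Longrightarrow> r\<^sup>2 < (norm (X - c))\<^sup>2 \<Longrightarrow> \<delta> \<le> (norm (X - c))\<^sup>2 - r\<^sup>2"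
proof
  define f where "f X = (norm (X - c))\<^sup>2 - r\<^sup>2" for X
  define T where "T = {X \<in> L. norm X \<le> norm c + sqrt (r\<^sup>2 + 1) \<and> f X > 0}"
  have "finite T"
    using fin by (rule finite_subset[rotated]) (auto simp: T_def)
  show "Min (insert 1 (f ` T)) > 0"
    using \<open>finite T\<close> by (auto simp: T_def)
  fix X assume X: "X \<in> L" "r\<^sup>2 < (norm (X - c))\<^sup>2"
  show "Min (insert 1 (f ` T)) \<le> (norm (X - c))\<^sup>2 - r\<^sup>2"
  proof (cases "f X \<le> 1")
    case True
    then have "norm (X - c) \<le> sqrt (r\<^sup>2 + 1)"
      by (intro real_le_rsqrt) (simp add: f_def)
    then have "X \<in> T"
      using X norm_triangle_ineq[of c "X - c"] by (simp add: T_def f_def)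
    then show ?thesis
      using \<open>finite T\<close> by (simp add: f_def)
  next
    case False
    have "Min (insert 1 (f ` T)) \<le> 1"
      using \<open>finite T\<close> by (intro Min_le) auto
    then show ?thesis
      using False by (simp add: f_def)
  qed
qed

lemma linear_inj_sq_dist_coercive:
  fixes f :: "real^'n \<Rightarrow> 'a::euclidean_space"
  assumes "linear f" "inj f"
  obtains K where "K > 0"
    "\<And>x. r\<^sup>2 \<le> (norm (f x - q))\<^sup>2 \<Longrightarrow> 1 + (norm x)\<^sup>2 \<le> K * (1 + ((norm (f x - q))\<^sup>2 - r\<^sup>2))"
proof -
  obtain m where m: "m > 0" "\<And>x. m * norm x \<le> norm (f x)"
    using linear_inj_bounded_below_pos assms by blast
  define a where "a = 2 / m\<^sup>2"
  define K where "K = 1 + a * (1 + r\<^sup>2 + (norm q)\<^sup>2)"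
  have "a > 0"
    using m(1) by (simp add: a_def)
  then have "K > 0"
    by (simp add: K_def add_pos_nonneg)
  moreover have "1 + (norm x)\<^sup>2 \<le> K * (1 + ((norm (f x - q))\<^sup>2 - r\<^sup>2))"
    if x: "r\<^sup>2 \<le> (norm (f x - q))\<^sup>2" for x
  proof -
    define t where "t = norm (f x - q)"
    define s where "s = t\<^sup>2 - r\<^sup>2"
    have "m * norm x \<le> t + norm q"
      using m(2)[of x] norm_triangle_ineq[of "f x - q" q] by (simp add: t_def)
    then have "m\<^sup>2 * (norm x)\<^sup>2 \<le> (t + norm q)\<^sup>2"
      using power_mono[of "m * norm x" _ 2] m(1) by (simp add: power_mult_distrib)
    also have "\<dots> \<le> 2 * (t\<^sup>2 + (norm q)\<^sup>2)"
      using zero_le_power2[of "t - norm q"] by (simp add: power2_sum power2_diff)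
    finally have "(norm x)\<^sup>2 \<le> a * (s + r\<^sup>2 + (norm q)\<^sup>2)"
      using m(1) by (simp add: a_def s_def field_simps)
    also have "\<dots> \<le> a * ((1 + r\<^sup>2 + (norm q)\<^sup>2) * (1 + s))"
    proof (rule mult_left_mono)
      have "0 \<le> (r\<^sup>2 + (norm q)\<^sup>2) * s"
        using x by (simp add: s_def t_def)
      then show "s + r\<^sup>2 + (norm q)\<^sup>2 \<le> (1 + r\<^sup>2 + (norm q)\<^sup>2) * (1 + s)"
        by (simp add: algebra_simps)
    qed (use \<open>a > 0\<close> in simp)
    finally show ?thesis
      using x by (simp add: K_def s_def t_def algebra_simps)
  qed
  ultimately show ?thesis
    using that by blast
qed

lemma affine_minus_quad_form_bound:
  assumes "linear l"
  obtains K where "K > 0" "\<And>x. \<bar>\<kappa> + l x - quad_form B x\<bar> \<le> K * (1 + (norm x)\<^sup>2)"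
proof -
  obtain Kl where Kl: "Kl > 0" "\<And>x. norm (l x) \<le> Kl * norm x"
    using linear_bounded_pos assms by blast
  obtain KB where KB: "KB > 0" "\<And>x. norm (B *v x) \<le> KB * norm x"
    using linear_bounded_pos[OF matrix_vector_mul_linear[of B]] by blast
  have "\<bar>\<kappa> + l x - quad_form B x\<bar> \<le> (\<bar>\<kappa>\<bar> + Kl + KB) * (1 + (norm x)\<^sup>2)" for x
  proof -
    have "\<bar>quad_form B x\<bar> \<le> norm x * norm (B *v x)"
      unfolding quad_form_def by (rule Cauchy_Schwarz_ineq2)
    also have "\<dots> \<le> KB * (norm x)\<^sup>2"
      using mult_left_mono[OF KB(2)[of x] norm_ge_zero[of x]] by (simp add: power2_eq_square mult_ac)
    also have "\<dots> \<le> KB * (1 + (norm x)\<^sup>2)"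
      using KB(1) by simp
    finally have Q: "\<bar>quad_form B x\<bar> \<le> KB * (1 + (norm x)\<^sup>2)" .
    have "norm x \<le> 1 + (norm x)\<^sup>2"
      using zero_le_power2[of "norm x - 1"]
      by (simp add: power2_diff) (use norm_ge_zero[of x] in linarith)
    then have "Kl * norm x \<le> Kl * (1 + (norm x)\<^sup>2)"
      using Kl(1) by simp
    then have L: "\<bar>l x\<bar> \<le> Kl * (1 + (norm x)\<^sup>2)"
      using Kl(2)[of x] by simp
    have "\<bar>\<kappa> + l x - quad_form B x\<bar> \<le> \<bar>\<kappa>\<bar> + \<bar>l x\<bar> + \<bar>quad_form B x\<bar>"
      using abs_triangle_ineq[of "\<kappa> + l x" "- quad_form B x"] abs_triangle_ineq[of \<kappa> "l x"] by simp
    moreover have "(\<bar>\<kappa>\<bar> + Kl + KB) * (1 + (norm x)\<^sup>2)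
        = \<bar>\<kappa>\<bar> + \<bar>\<kappa>\<bar> * (norm x)\<^sup>2 + Kl * (1 + (norm x)\<^sup>2) + KB * (1 + (norm x)\<^sup>2)"
      by (simp add: algebra_simps)
    moreover have "0 \<le> \<bar>\<kappa>\<bar> * (norm x)\<^sup>2"
      by simp
    ultimately show ?thesis
      using Q L by linarith
  qed
  moreover have "\<bar>\<kappa>\<bar> + Kl + KB > 0"
    using Kl KB by simp
  ultimately show ?thesis
    using that by blast
qed

lemma small_multiple_le:
  fixes s h \<epsilon> \<delta> M :: real
  assumes "0 < \<delta>" "0 < M" "s = 0 \<and> h = 0 \<or> \<delta> \<le> s" "\<bar>h\<bar> \<le> M * (1 + s)"
    and "0 \<le> \<epsilon>" "\<epsilon> \<le> \<delta> / (M * (1 + \<delta>))"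
  shows "\<epsilon> * h \<le> s"
  using assms(3)
proof
  assume s: "\<delta> \<le> s"
  have "\<epsilon> * h \<le> \<epsilon> * \<bar>h\<bar>"
    using assms(5) by (simp add: mult_left_mono)
  also have "\<dots> \<le> \<delta> / (M * (1 + \<delta>)) * (M * (1 + s))"
    using assms by (intro mult_mono) auto
  also have "\<dots> = \<delta> * (1 + s) / (1 + \<delta>)"
    using assms(2) by simp
  also have "\<dots> \<le> s"
    using assms(1) s by (simp add: field_simps)
  finally show ?thesis .
qed simp

section \<open>Delaunay polytopes\<close>

locale delaunay_setting =
  fixes b :: "'n::finite \<Rightarrow> real^'n" and vert :: "'v::finite \<Rightarrow> real^'n" and v0 :: 'v
    and z :: "'v \<Rightarrow> 'n \<Rightarrow> int" and c :: "real^'n" and r :: real and s0 :: 'v and sg :: "'n \<Rightarrow> 'v"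
  assumes inj_basis: "inj (\<lambda>x::real^'n. \<Sum>i\<in>UNIV. x$i *\<^sub>R b i)"
    and coords: "\<And>v. vert v - vert v0 = (\<Sum>i\<in>UNIV. of_int (z v i) *\<^sub>R b i)"
    and empty_sphere: "\<And>a. a \<in> lattice_of_basis b \<Longrightarrow> r\<^sup>2 \<le> (norm (a - c))\<^sup>2"
    and vertices_on_sphere: "range vert = {a \<in> lattice_of_basis b. (norm (a - c))\<^sup>2 = r\<^sup>2}"
    and affine_basis: "invertible ((\<chi> i k. real_of_int (z (sg k) i) - real_of_int (z s0 i)) :: real^'n^'n)"
begin

definition ell :: "real^'n \<Rightarrow> real^'n" where
  "ell x = (\<Sum>i\<in>UNIV. x$i *\<^sub>R b i)"

definition zvec :: "'v \<Rightarrow> real^'n" where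
  "zvec v = (\<chi> i. real_of_int (z v i))"

definition edge_matrix :: "real^'n^'n" where
  "edge_matrix = (\<chi> i k. zvec (sg k) $ i - zvec s0 $ i)"

definition acoord :: "'v \<Rightarrow> real^'n" where
  "acoord v = matrix_inv edge_matrix *v (zvec v - zvec s0)"

definition Y_P :: "('v \<Rightarrow> int) set" where
  "Y_P = {y. (\<Sum>v\<in>UNIV. of_int (y v) *\<^sub>R vert v) = 0 \<and> sum y UNIV = 0}"

definition B_P :: "(real^'n^'n) set" where
  "B_P = {B. transpose B = B \<and>
     (\<forall>y::'v \<Rightarrow> int. (\<Sum>v\<in>UNIV. of_int (y v) *\<^sub>R vert v) = 0 \<and> sum y UNIV = 0 \<longrightarrow>
        (\<Sum>i\<in>UNIV. \<Sum>j\<in>UNIV. (\<Sum>v\<in>UNIV. of_int (y v * z v i * z v j)) * B$i$j) = 0)}"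

definition form_distance :: "real^'n^'n \<Rightarrow> real^'v^'v" where
  "form_distance B = (\<chi> u v. quad_form B (zvec u - zvec v))"

abbreviation d_P :: "real^'v^'v" where
  "d_P \<equiv> delaunay_distance vert"

lemma linear_ell: "linear ell"
  unfolding ell_def[abs_def] by (rule linear_basis_lincomb)

lemma inj_ell: "inj ell"
  using inj_basis unfolding ell_def[abs_def] .

lemma vert_eq: "vert v = vert v0 + ell (zvec v)"
  using coords[of v] by (simp add: ell_def zvec_def algebra_simps)

lemma vert_on_sphere: "(norm (vert v - c))\<^sup>2 = r\<^sup>2" and vert_in_lattice: "vert v \<in> lattice_of_basis b"
  using vertices_on_sphere by blast+

lemma sum_scaleR_vert:
  "(\<Sum>v\<in>UNIV. \<beta> v *\<^sub>R vert v) = sum \<beta> UNIV *\<^sub>R vert v0 + ell (\<Sum>v\<in>UNIV. \<beta> v *\<^sub>R zvec v)"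
proof -
  have "(\<Sum>v\<in>UNIV. \<beta> v *\<^sub>R vert v) = (\<Sum>v\<in>UNIV. \<beta> v *\<^sub>R vert v0 + \<beta> v *\<^sub>R ell (zvec v))"
    by (rule sum.cong[OF refl]) (metis vert_eq scaleR_add_right)
  then show ?thesis
    by (simp add: sum.distrib linear_sum[OF linear_ell] linear_scale[OF linear_ell] scaleR_sum_left)
qed

lemma mem_Y_P_iff: "y \<in> Y_P \<longleftrightarrow> sum y UNIV = 0 \<and> (\<Sum>v\<in>UNIV. of_int (y v) *\<^sub>R zvec v) = 0"
  using sum_scaleR_vert[of "\<lambda>v. of_int (y v)"] inj_ell linear_ell
  by (auto simp: Y_P_def linear_injective_0 linear_0 simp flip: of_int_sum)

lemma invertible_edge_matrix: "invertible edge_matrix"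
  using affine_basis by (simp add: edge_matrix_def zvec_def)

lemma column_edge_matrix: "column k edge_matrix = zvec (sg k) - zvec s0"
  by (simp add: edge_matrix_def column_def vec_eq_iff)

lemma orthogonal_Y_P_imp_affine:
  assumes "\<And>y. y \<in> Y_P \<Longrightarrow> (\<Sum>v\<in>UNIV. of_int (y v) * g v) = 0"
  shows "g u = g s0 + acoord u \<bullet> (\<chi> k. g (sg k) - g s0)"
  unfolding acoord_def
  by (rule orthogonal_integer_dependencies_imp_affine[OF _ edge_matrix_def invertible_edge_matrix])
    (auto simp: zvec_def mem_Y_P_iff intro: assms)

lemma acoord_diff: "acoord u - acoord w = matrix_inv edge_matrix *v (zvec u - zvec w)"
  by (simp add: acoord_def matrix_vector_mult_diff_distrib)

lemma mem_B_P_iff: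
  "B \<in> B_P \<longleftrightarrow> transpose B = B \<and> (\<forall>y\<in>Y_P. (\<Sum>v\<in>UNIV. of_int (y v) * quad_form B (zvec v)) = 0)"
proof -
  have eq: "(\<Sum>i\<in>UNIV. \<Sum>j\<in>UNIV. (\<Sum>v\<in>UNIV. of_int (y v * z v i * z v j)) * B$i$j)
      = (\<Sum>v\<in>UNIV. of_int (y v) * quad_form B (zvec v))" for y
  proof -
    have "(\<Sum>v\<in>UNIV. of_int (y v) * quad_form B (zvec v))
        = (\<Sum>v\<in>UNIV. \<Sum>i\<in>UNIV. \<Sum>j\<in>UNIV. of_int (y v * z v i * z v j) * B$i$j)"
      by (simp add: quad_form_def inner_vec_def matrix_vector_mult_def zvec_def sum_distrib_left mult_ac)
    also have "\<dots> = (\<Sum>i\<in>UNIV. \<Sum>v\<in>UNIV. \<Sum>j\<in>UNIV. of_int (y v * z v i * z v j) * B$i$j)"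
      by (rule sum.swap)
    also have "\<dots> = (\<Sum>i\<in>UNIV. \<Sum>j\<in>UNIV. \<Sum>v\<in>UNIV. of_int (y v * z v i * z v j) * B$i$j)"
      by (rule sum.cong[OF refl sum.swap])
    finally show ?thesis
      by (simp add: sum_distrib_right)
  qed
  show ?thesis
    unfolding B_P_def Y_P_def mem_Collect_eq eq by blast
qed

lemma linear_form_distance: "linear form_distance"
  by (rule linearI) (simp_all add: form_distance_def vec_eq_iff quad_form_add quad_form_scaleR)

lemma subspace_B_P: "subspace B_P"
proof -
  have zero: "0 \<in> B_P"
    by (simp add: mem_B_P_iff transpose_def vec_eq_iff)
  have add: "A + B \<in> B_P" if "A \<in> B_P" "B \<in> B_P" for A B
  proof -
    have "transpose (A + B) = transpose A + transpose B"
      by (simp add: transpose_def vec_eq_iff)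
    then show ?thesis
      using that by (simp add: mem_B_P_iff quad_form_add distrib_left sum.distrib)
  qed
  have scale: "a *\<^sub>R B \<in> B_P" if "B \<in> B_P" for a B
  proof -
    have "transpose (a *\<^sub>R B) = a *\<^sub>R transpose B"
      by (simp add: transpose_def vec_eq_iff)
    moreover have "(\<Sum>v\<in>UNIV. of_int (y v) * quad_form (a *\<^sub>R B) (zvec v))
        = a * (\<Sum>v\<in>UNIV. of_int (y v) * quad_form B (zvec v))" for y
      by (simp add: quad_form_scaleR sum_distrib_left mult.left_commute)
    ultimately show ?thesis
      using that by (simp add: mem_B_P_iff)
  qed
  show ?thesis
    by (rule subspaceI[OF zero add scale])
qed

lemma form_distance_mem_B_P:
  assumes B: "transpose B = B"
    and orth: "\<And>y. y \<in> Y_P \<Longrightarrow> (\<Sum>v\<in>UNIV. of_int (y v) * form_distance B $ v $ s0) = 0"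
  shows "B \<in> B_P"
proof -
  have "(\<Sum>v\<in>UNIV. of_int (y v) * quad_form B (zvec v)) = 0" if y: "y \<in> Y_P" for y
  proof -
    let ?w = "B *v zvec s0"
    have qf_v: "quad_form B (zvec v) = form_distance B $ v $ s0 - quad_form B (zvec s0) + 2 * (zvec v \<bullet> ?w)" for v
      by (simp add: form_distance_def quad_form_diff[OF B])
    have "(\<Sum>v\<in>UNIV. of_int (y v) * quad_form B (zvec v))
        = (\<Sum>v\<in>UNIV. of_int (y v) * form_distance B $ v $ s0 - of_int (y v) * quad_form B (zvec s0)
            + 2 * (of_int (y v) * (zvec v \<bullet> ?w)))"
      by (rule sum.cong[OF refl], subst qf_v) (simp add: algebra_simps)
    also have "\<dots> = (\<Sum>v\<in>UNIV. of_int (y v) * form_distance B $ v $ s0)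
        - of_int (sum y UNIV) * quad_form B (zvec s0) + 2 * ((\<Sum>v\<in>UNIV. of_int (y v) *\<^sub>R zvec v) \<bullet> ?w)"
      by (simp add: sum.distrib sum_subtractf inner_sum_left sum_distrib_left sum_distrib_right)
    finally show ?thesis
      using y orth[OF y] by (simp add: mem_Y_P_iff flip: of_int_sum)
  qed
  then show ?thesis
    using B by (simp add: mem_B_P_iff)
qed

lemma orthogonal_rows_imp_biaffine:
  assumes sym: "\<And>u v. d$u$v = d$v$u"
    and orth: "\<And>x y. y \<in> Y_P \<Longrightarrow> (\<Sum>u\<in>UNIV. of_int (y u) * d$x$u) = 0"
  obtains a a' E where "\<And>w u. d$w$u = d$s0$s0 + a \<bullet> acoord w + a' \<bullet> acoord u + acoord w \<bullet> (E *v acoord u)"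
proof -
  have orth': "(\<Sum>w\<in>UNIV. of_int (y w) * d$w$x) = 0" if "y \<in> Y_P" for x y
    using orth[OF that, of x] by (simp add: sym)
  define R where "R w = (\<chi> k. d$w$(sg k) - d$w$s0)" for w
  define a where "a = (\<chi> k. d$(sg k)$s0 - d$s0$s0)"
  define E where "E = (\<chi> l k. R (sg l) $ k - R s0 $ k)"
  have row: "d$w$u = d$w$s0 + acoord u \<bullet> R w" for w u
    unfolding R_def by (rule orthogonal_Y_P_imp_affine) (rule orth)
  have column: "d$w$s0 = d$s0$s0 + acoord w \<bullet> a" for w
    unfolding a_def by (rule orthogonal_Y_P_imp_affine[of "\<lambda>w. d$w$s0"]) (rule orth')
  have R_affine: "R w $ k = R s0 $ k + acoord w \<bullet> (\<chi> l. R (sg l) $ k - R s0 $ k)" for w k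
  proof (rule orthogonal_Y_P_imp_affine[of "\<lambda>w. R w $ k"])
    fix y assume "y \<in> Y_P"
    then show "(\<Sum>w\<in>UNIV. of_int (y w) * R w $ k) = 0"
      using orth'[of y "sg k"] orth'[of y s0] by (simp add: R_def right_diff_distrib sum_subtractf)
  qed
  have R_eq: "R w = R s0 + (\<chi> k. acoord w \<bullet> (\<chi> l. E $ l $ k))" for w
    by (simp add: vec_eq_iff E_def R_affine[of w])
  have R_split: "acoord u \<bullet> R w = acoord u \<bullet> R s0 + acoord w \<bullet> (E *v acoord u)" for w u
  proof -
    have "acoord u \<bullet> (\<chi> k. acoord w \<bullet> (\<chi> l. E $ l $ k)) = acoord w \<bullet> (E *v acoord u)"
      by (simp add: inner_vec_def matrix_vector_mult_def sum_distrib_left mult_ac;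
          subst sum.swap; simp add: mult_ac)
    then show ?thesis
      by (simp only: R_eq[of w] inner_add_right)
  qed
  have "d$w$u = d$s0$s0 + a \<bullet> acoord w + R s0 \<bullet> acoord u + acoord w \<bullet> (E *v acoord u)" for w u
    using row[of w u] column[of w] R_split[of u w] inner_commute[of a "acoord w"]
      inner_commute[of "R s0" "acoord u"]
    by linarith
  then show ?thesis
    using that by blast
qed

lemma symmetric_orthogonal_eq_form_distance:
  assumes sym: "\<And>u v. d$u$v = d$v$u" and diag: "\<And>v. d$v$v = 0"
    and orth: "\<And>x y. y \<in> Y_P \<Longrightarrow> (\<Sum>u\<in>UNIV. of_int (y u) * d$x$u) = 0"
  shows "d \<in> form_distance ` B_P"
proof -
  obtain a a' E where biaffine:
    "\<And>w u. d$w$u = d$s0$s0 + a \<bullet> acoord w + a' \<bullet> acoord u + acoord w \<bullet> (E *v acoord u)"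
    using orthogonal_rows_imp_biaffine[OF sym orth] by blast
  define S where "S = (- 1 / 4) *\<^sub>R (E + transpose E)"
  define B where "B = transpose (matrix_inv edge_matrix) ** S ** matrix_inv edge_matrix"
  have "transpose S = S"
    by (simp add: S_def transpose_def vec_eq_iff add.commute)
  then have B_sym: "transpose B = B"
    unfolding B_def by (rule symmetric_congruence)
  have "d$w$u = quad_form S (acoord w - acoord u)" for w u
    unfolding S_def using biaffine sym diag by (rule symmetric_biaffine_eq_quad_form)
  then have d_eq: "d = form_distance B"
    by (simp add: vec_eq_iff form_distance_def B_def quad_form_congruence acoord_diff)
  moreover have "B \<in> B_P"
  proof (rule form_distance_mem_B_P[OF B_sym])
    fix y assume "y \<in> Y_P"
    have "(\<Sum>v\<in>UNIV. of_int (y v) * d$v$s0) = (\<Sum>v\<in>UNIV. of_int (y v) * d$s0$v)"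
      by (simp add: sym[of _ s0])
    then show "(\<Sum>v\<in>UNIV. of_int (y v) * form_distance B $ v $ s0) = 0"
      using orth[OF \<open>y \<in> Y_P\<close>, of s0] by (simp flip: d_eq)
  qed
  ultimately show ?thesis
    by blast
qed

lemma hyp_form_d_P:
  assumes "sum \<beta> UNIV = 1"
  shows "hyp_form (of_int \<circ> \<beta>) d_P = 2 * r\<^sup>2 - 2 * (norm ((\<Sum>u\<in>UNIV. of_int (\<beta> u) *\<^sub>R vert u) - c))\<^sup>2"
proof -
  have \<beta>: "sum (of_int \<circ> \<beta>) UNIV = (1::real)"
    using assms by (simp flip: of_int_sum)
  show ?thesis
    using hyp_form_sq_dist[OF \<beta>, of vert c] \<beta>
    by (simp add: delaunay_distance_def vert_on_sphere flip: sum_distrib_right)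
qed

lemma tight_face_row_orthogonal:
  assumes d: "d \<in> hyp_tight_face d_P" and y: "y \<in> Y_P"
  shows "(\<Sum>u\<in>UNIV. of_int (y u) * d$x$u) = 0"
proof -
  have sym: "\<And>u v. d$u$v = d$v$u" and diag: "\<And>v. d$v$v = 0"
    using d by (simp_all add: hyp_tight_face_def mem_hyp_cone_iff)
  let ?S = "\<Sum>u\<in>UNIV. of_int (y u) * d$x$u"
  have "2 * of_int t * ?S + (of_int t)\<^sup>2 * hyp_form (of_int \<circ> y) d = 0" for t :: int
  proof -
    \<comment> \<open>the barycentre of \<open>\<beta>\<close> is the vertex \<open>vert x\<close>, so \<open>\<beta>\<close> is tight at \<open>d_P\<close>\<close>
    define \<beta> where "\<beta> u = (if u = x then 1 else 0) + t * y u" for u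
    have "sum \<beta> UNIV = 1"
      using y by (simp add: \<beta>_def mem_Y_P_iff sum.distrib flip: sum_distrib_left)
    moreover have "(\<Sum>u\<in>UNIV. of_int (\<beta> u) *\<^sub>R vert u) = vert x"
    proof -
      have "(\<Sum>u\<in>UNIV. of_int (\<beta> u) *\<^sub>R vert u)
          = (\<Sum>u\<in>UNIV. (if u = x then vert u else 0) + of_int t *\<^sub>R (of_int (y u) *\<^sub>R vert u))"
        by (rule sum.cong) (auto simp: \<beta>_def scaleR_add_left)
      also have "\<dots> = vert x + of_int t *\<^sub>R (\<Sum>u\<in>UNIV. of_int (y u) *\<^sub>R vert u)"
        by (simp add: sum.distrib scaleR_sum_right)
      finally show ?thesis
        using y by (simp add: Y_P_def)
    qed
    ultimately have "hyp_form (of_int \<circ> \<beta>) d = 0"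
      using d hyp_form_d_P vert_on_sphere by (simp add: hyp_tight_face_def)
    moreover have "(of_int \<circ> \<beta> :: 'v \<Rightarrow> real) = (\<lambda>u. (if u = x then 1 else 0) + of_int t * (of_int \<circ> y) u)"
      by (simp add: \<beta>_def fun_eq_iff)
    ultimately show ?thesis
      using hyp_form_point_mass_plus[of x "of_int t" "of_int \<circ> y" d] by (simp add: diag sym)
  qed
  from this[of 1] this[of "-1"] show ?thesis
    by simp
qed

lemma hyp_tight_face_subset: "hyp_tight_face d_P \<subseteq> form_distance ` B_P"
proof
  fix d assume d: "d \<in> hyp_tight_face d_P"
  then have "\<And>u v. d$u$v = d$v$u" "\<And>v. d$v$v = 0"
    by (simp_all add: hyp_tight_face_def mem_hyp_cone_iff)
  then show "d \<in> form_distance ` B_P"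
    using symmetric_orthogonal_eq_form_distance tight_face_row_orthogonal[OF d] by blast
qed

lemma affine_comb_vert:
  assumes "sum \<beta> UNIV = 1"
  shows "(\<Sum>u\<in>UNIV. of_int (\<beta> u) *\<^sub>R vert u) = vert v0 + ell (\<Sum>u\<in>UNIV. of_int (\<beta> u) *\<^sub>R zvec u)"
  using sum_scaleR_vert[of "\<lambda>u. of_int (\<beta> u)"] assms by (simp flip: of_int_sum)

lemma affine_comb_vert_in_lattice:
  assumes "sum \<beta> UNIV = 1"
  shows "(\<Sum>u\<in>UNIV. of_int (\<beta> u) *\<^sub>R vert u) \<in> lattice_of_basis b"
proof -
  obtain w where w: "vert v0 = (\<Sum>i\<in>UNIV. of_int (w i) *\<^sub>R b i)"
    using vert_in_lattice[of v0] by (auto simp: lattice_of_basis_def)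
  have eq: "vert v0 + ell (\<Sum>u\<in>UNIV. of_int (\<beta> u) *\<^sub>R zvec u)
      = (\<Sum>i\<in>UNIV. of_int (w i + (\<Sum>u\<in>UNIV. \<beta> u * z u i)) *\<^sub>R b i)"
    unfolding w ell_def by (simp add: zvec_def scaleR_add_left sum.distrib)
  show ?thesis
    unfolding affine_comb_vert[OF assms] lattice_of_basis_def mem_Collect_eq eq
    by (intro exI[of _ "\<lambda>i. w i + (\<Sum>u\<in>UNIV. \<beta> u * z u i)"]) simp
qed

lemma d_P_in_hyp_cone: "d_P \<in> hyp_cone"
  unfolding mem_hyp_cone_iff
  using hyp_form_d_P empty_sphere[OF affine_comb_vert_in_lattice]
  by (auto simp: delaunay_distance_def norm_minus_commute)

lemma hyp_form_d_P_gap: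
  obtains \<delta> where "\<delta> > 0"
    "\<And>\<beta>. sum \<beta> UNIV = 1 \<Longrightarrow> hyp_form (of_int \<circ> \<beta>) d_P = 0 \<or> hyp_form (of_int \<circ> \<beta>) d_P \<le> - \<delta>"
proof -
  obtain \<delta> where \<delta>: "\<delta> > 0" "\<And>X. X \<in> lattice_of_basis b \<Longrightarrow> r\<^sup>2 < (norm (X - c))\<^sup>2 \<Longrightarrow>
      \<delta> \<le> (norm (X - c))\<^sup>2 - r\<^sup>2"
    using sphere_power_gap[OF finite_lattice_points_in_ball[OF inj_basis]] by blast
  have "hyp_form (of_int \<circ> \<beta>) d_P = 0 \<or> hyp_form (of_int \<circ> \<beta>) d_P \<le> - (2 * \<delta>)"
    if "sum \<beta> UNIV = 1" for \<beta>
  proof -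
    let ?p = "(norm ((\<Sum>u\<in>UNIV. of_int (\<beta> u) *\<^sub>R vert u) - c))\<^sup>2"
    have "r\<^sup>2 \<le> ?p" "r\<^sup>2 < ?p \<Longrightarrow> \<delta> \<le> ?p - r\<^sup>2"
      using empty_sphere \<delta>(2) affine_comb_vert_in_lattice[OF that] by auto
    then show ?thesis
      unfolding hyp_form_d_P[OF that] by linarith
  qed
  moreover have "2 * \<delta> > 0"
    using \<delta>(1) by simp
  ultimately show ?thesis
    using that by blast
qed

lemma hyp_form_d_P_eq_0:
  assumes \<beta>: "sum \<beta> UNIV = 1" and tight: "hyp_form (of_int \<circ> \<beta>) d_P = 0"
  obtains u where "(\<Sum>v\<in>UNIV. of_int (\<beta> v) *\<^sub>R zvec v) = zvec u"
proof -
  have "(\<Sum>v\<in>UNIV. of_int (\<beta> v) *\<^sub>R vert v) \<in> range vert"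
    using tight affine_comb_vert_in_lattice[OF \<beta>] by (simp add: vertices_on_sphere hyp_form_d_P[OF \<beta>])
  then obtain u where "vert v0 + ell (\<Sum>v\<in>UNIV. of_int (\<beta> v) *\<^sub>R zvec v) = vert v0 + ell (zvec u)"
    by (metis affine_comb_vert[OF \<beta>] vert_eq rangeE)
  then show ?thesis
    using that inj_ell by (simp add: inj_eq)
qed

lemma B_P_quad_form_affine:
  assumes "B \<in> B_P"
  obtains \<kappa> l where "linear l" "\<And>u. quad_form B (zvec u) = \<kappa> + l (zvec u)"
proof -
  define g where "g u = quad_form B (zvec u)" for u
  define l where "l x = (matrix_inv edge_matrix *v x) \<bullet> (\<chi> k. g (sg k) - g s0)" for x
  have "linear l"
    unfolding l_def[abs_def]
    by (intro linear_compose[OF matrix_vector_mul_linear, unfolded o_def] bounded_linear.linear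
        bounded_linear_inner_left)
  moreover have "g u = (g s0 - l (zvec s0)) + l (zvec u)" for u
    using orthogonal_Y_P_imp_affine[of g u] assms
    by (simp add: g_def mem_B_P_iff l_def acoord_def matrix_vector_mult_diff_distrib inner_diff_left)
  ultimately show ?thesis
    using that unfolding g_def by blast
qed

lemma hyp_form_form_distance:
  assumes B: "transpose B = B" and l: "linear l" and affine: "\<And>u. quad_form B (zvec u) = \<kappa> + l (zvec u)"
    and \<beta>: "sum \<beta> UNIV = 1" and W: "W = (\<Sum>v\<in>UNIV. of_int (\<beta> v) *\<^sub>R zvec v)"
  shows "hyp_form (of_int \<circ> \<beta>) (form_distance B) = 2 * (\<kappa> + l W - quad_form B W)"
proof -
  have \<beta>': "sum (of_int \<circ> \<beta>) UNIV = (1::real)"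
    using \<beta> by (simp flip: of_int_sum)
  have "(\<Sum>u\<in>UNIV. of_int (\<beta> u) * quad_form B (zvec u)) = \<kappa> + l W"
    using \<beta>' by (simp add: affine W distrib_left sum.distrib linear_sum[OF l] linear_scale[OF l]
        flip: sum_distrib_right)
  then show ?thesis
    using hyp_form_quad_form_diff[OF B \<beta>', of zvec] by (simp add: form_distance_def W)
qed

lemma B_P_hyp_form_bound:
  assumes "B \<in> B_P"
  obtains M where "M > 0"
    "\<And>\<beta>. sum \<beta> UNIV = 1 \<Longrightarrow>
       \<bar>hyp_form (of_int \<circ> \<beta>) (form_distance B)\<bar> \<le> M * (1 - hyp_form (of_int \<circ> \<beta>) d_P)"
    "\<And>\<beta>. sum \<beta> UNIV = 1 \<Longrightarrow> hyp_form (of_int \<circ> \<beta>) d_P = 0 \<Longrightarrow>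
       hyp_form (of_int \<circ> \<beta>) (form_distance B) = 0"
proof -
  have B: "transpose B = B"
    using assms by (simp add: mem_B_P_iff)
  obtain \<kappa> l where l: "linear l" and affine: "\<And>u. quad_form B (zvec u) = \<kappa> + l (zvec u)"
    using B_P_quad_form_affine[OF assms] by blast
  note hyp_form_eq = hyp_form_form_distance[OF B l affine]
  obtain K where K: "K > 0" "\<And>x. \<bar>\<kappa> + l x - quad_form B x\<bar> \<le> K * (1 + (norm x)\<^sup>2)"
    using affine_minus_quad_form_bound[OF l] by blast
  obtain K' where K': "K' > 0" "\<And>x. r\<^sup>2 \<le> (norm (ell x - (c - vert v0)))\<^sup>2 \<Longrightarrow>
      1 + (norm x)\<^sup>2 \<le> K' * (1 + ((norm (ell x - (c - vert v0)))\<^sup>2 - r\<^sup>2))"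
    using linear_inj_sq_dist_coercive[OF linear_ell inj_ell] by blast
  have "\<bar>hyp_form (of_int \<circ> \<beta>) (form_distance B)\<bar> \<le> 2 * K * K' * (1 - hyp_form (of_int \<circ> \<beta>) d_P)"
    if \<beta>: "sum \<beta> UNIV = 1" for \<beta>
  proof -
    define W where "W = (\<Sum>v\<in>UNIV. of_int (\<beta> v) *\<^sub>R zvec v)"
    define s where "s = (norm (ell W - (c - vert v0)))\<^sup>2 - r\<^sup>2"
    have dist: "ell W - (c - vert v0) = (\<Sum>u\<in>UNIV. of_int (\<beta> u) *\<^sub>R vert u) - c"
      by (simp add: affine_comb_vert[OF \<beta>] W_def)
    have "s \<ge> 0"
      using empty_sphere[OF affine_comb_vert_in_lattice[OF \<beta>]] by (simp add: s_def dist)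
    have "1 + (norm W)\<^sup>2 \<le> K' * (1 + s)"
      using K'(2)[of W] \<open>s \<ge> 0\<close> by (simp add: s_def)
    then have "K * (1 + (norm W)\<^sup>2) \<le> K * (K' * (1 + 2 * s))"
      using K(1) K'(1) \<open>s \<ge> 0\<close> by (smt (verit) mult_left_mono)
    then have "\<bar>hyp_form (of_int \<circ> \<beta>) (form_distance B)\<bar> \<le> 2 * K * K' * (1 + 2 * s)"
      using K(2)[of W] by (simp add: hyp_form_eq[OF \<beta> W_def] abs_mult)
    moreover have "hyp_form (of_int \<circ> \<beta>) d_P = - 2 * s"
      by (simp add: hyp_form_d_P[OF \<beta>] s_def dist)
    ultimately show ?thesis
      by simp
  qed
  moreover have "hyp_form (of_int \<circ> \<beta>) (form_distance B) = 0"
    if \<beta>: "sum \<beta> UNIV = 1" and tight: "hyp_form (of_int \<circ> \<beta>) d_P = 0" for \<beta>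
  proof -
    obtain u where u: "(\<Sum>v\<in>UNIV. of_int (\<beta> v) *\<^sub>R zvec v) = zvec u"
      using hyp_form_d_P_eq_0[OF \<beta> tight] by blast
    show ?thesis
      using hyp_form_eq[OF \<beta> u[symmetric]] affine[of u] by simp
  qed
  moreover have "2 * K * K' > 0"
    using K(1) K'(1) by simp
  ultimately show ?thesis
    using that by blast
qed

lemma form_distance_symmetric: "form_distance B $ u $ v = form_distance B $ v $ u"
  using quad_form_minus[of B "zvec u - zvec v"] by (simp add: form_distance_def)

lemma B_P_perturbation:
  assumes "B \<in> B_P"
  obtains e where "e > 0" "\<And>\<epsilon>. 0 \<le> \<epsilon> \<Longrightarrow> \<epsilon> \<le> e \<Longrightarrow> d_P + \<epsilon> *\<^sub>R form_distance B \<in> hyp_cone"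
proof -
  obtain \<delta> where \<delta>: "\<delta> > 0"
    "\<And>\<beta>. sum \<beta> UNIV = 1 \<Longrightarrow> hyp_form (of_int \<circ> \<beta>) d_P = 0 \<or> hyp_form (of_int \<circ> \<beta>) d_P \<le> - \<delta>"
    using hyp_form_d_P_gap by blast
  obtain M where M: "M > 0"
    "\<And>\<beta>. sum \<beta> UNIV = 1 \<Longrightarrow>
       \<bar>hyp_form (of_int \<circ> \<beta>) (form_distance B)\<bar> \<le> M * (1 - hyp_form (of_int \<circ> \<beta>) d_P)"
    "\<And>\<beta>. sum \<beta> UNIV = 1 \<Longrightarrow> hyp_form (of_int \<circ> \<beta>) d_P = 0 \<Longrightarrow>
       hyp_form (of_int \<circ> \<beta>) (form_distance B) = 0"
    using B_P_hyp_form_bound[OF assms] by blast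
  have "d_P + \<epsilon> *\<^sub>R form_distance B \<in> hyp_cone" if \<epsilon>: "0 \<le> \<epsilon>" "\<epsilon> \<le> \<delta> / (M * (1 + \<delta>))" for \<epsilon>
  proof -
    have "hyp_form (of_int \<circ> \<beta>) (d_P + \<epsilon> *\<^sub>R form_distance B) \<le> 0"
      if \<beta>: "sum \<beta> UNIV = 1" for \<beta>
    proof -
      have "\<epsilon> * hyp_form (of_int \<circ> \<beta>) (form_distance B) \<le> - hyp_form (of_int \<circ> \<beta>) d_P"
        using \<delta>(2)[OF \<beta>] M(2,3)[OF \<beta>] by (intro small_multiple_le[OF \<delta>(1) M(1) _ _ \<epsilon>]) auto
      then show ?thesis
        by (simp add: hyp_form_add hyp_form_scaleR)
    qed
    moreover have "(d_P + \<epsilon> *\<^sub>R form_distance B) $ u $ v = (d_P + \<epsilon> *\<^sub>R form_distance B) $ v $ u"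
      for u v
      using d_P_in_hyp_cone form_distance_symmetric[of B u v] by (simp add: mem_hyp_cone_iff)
    moreover have "(d_P + \<epsilon> *\<^sub>R form_distance B) $ v $ v = 0" for v
      using d_P_in_hyp_cone by (simp add: mem_hyp_cone_iff form_distance_def)
    ultimately show ?thesis
      by (simp add: mem_hyp_cone_iff)
  qed
  moreover have "\<delta> / (M * (1 + \<delta>)) > 0"
    using \<delta>(1) M(1) by simp
  ultimately show ?thesis
    using that by blast
qed

lemma B_P_two_sided_perturbation:
  assumes "B \<in> B_P"
  shows "\<exists>e>0. d_P + e *\<^sub>R form_distance B \<in> hyp_cone \<and> d_P - e *\<^sub>R form_distance B \<in> hyp_cone"
proof -
  obtain e1 where e1: "e1 > 0" "\<And>\<epsilon>. 0 \<le> \<epsilon> \<Longrightarrow> \<epsilon> \<le> e1 \<Longrightarrow> d_P + \<epsilon> *\<^sub>R form_distance B \<in> hyp_cone"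
    using B_P_perturbation[OF assms] by blast
  obtain e2 where e2: "e2 > 0" "\<And>\<epsilon>. 0 \<le> \<epsilon> \<Longrightarrow> \<epsilon> \<le> e2 \<Longrightarrow> d_P + \<epsilon> *\<^sub>R form_distance (- B) \<in> hyp_cone"
    using B_P_perturbation[OF subspace_neg[OF subspace_B_P assms]] by blast
  have "form_distance (- B) = - form_distance B"
    using linear_form_distance by (rule linear_neg)
  then show ?thesis
    using e1(1) e2(1) e1(2)[of "min e1 e2"] e2(2)[of "min e1 e2"] by (intro exI[of _ "min e1 e2"]) simp
qed

lemma inj_on_form_distance: "inj_on form_distance B_P"
proof (subst linear_inj_on_iff_eq_0[OF linear_form_distance subspace_B_P], intro ballI impI)
  fix B assume B: "B \<in> B_P" "form_distance B = 0"
  let ?A = edge_matrix and ?M = "matrix_inv edge_matrix"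
  have sym: "transpose B = B"
    using B(1) by (simp add: mem_B_P_iff)
  \<comment> \<open>polarization: \<open>form_distance B\<close> determines the Gram matrix of \<open>B\<close> on the edge vectors\<close>
  have "(transpose ?A ** B ** ?A) $ k $ l = 0" for k l
  proof -
    have "2 * (column k ?A \<bullet> (B *v column l ?A))
        = form_distance B $ sg k $ s0 + form_distance B $ sg l $ s0 - form_distance B $ sg k $ sg l"
      using quad_form_diff[OF sym, of "column k ?A" "column l ?A"]
      by (simp add: form_distance_def column_edge_matrix)
    then show ?thesis
      using B(2) by (simp add: congruence_entry)
  qed
  then have "transpose ?A ** B ** ?A = 0"
    by (simp add: vec_eq_iff)
  moreover have "transpose (?A ** ?M) ** B ** (?A ** ?M) = transpose ?M ** (transpose ?A ** B ** ?A) ** ?M"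
    by (simp add: matrix_transpose_mul matrix_mul_assoc)
  ultimately have "transpose (?A ** ?M) ** B ** (?A ** ?M) = 0"
    by simp
  then show "B = 0"
    using invertible_matrix_inv[OF invertible_edge_matrix] by simp
qed

theorem dim_B_P_eq_delaunay_rank: "dim B_P = delaunay_rank vert"
proof -
  have "dim (minimal_face hyp_cone d_P) = dim (form_distance ` B_P)"
  proof (rule dim_minimal_face[OF hyp_tight_face_face_of])
    show "d_P \<in> hyp_tight_face d_P"
      by (rule mem_hyp_tight_face_self[OF d_P_in_hyp_cone])
    show "subspace (form_distance ` B_P)"
      by (rule linear_subspace_image[OF linear_form_distance subspace_B_P])
  qed (use hyp_tight_face_subset B_P_two_sided_perturbation in auto)
  also have "\<dots> = dim B_P"
    using inj_on_form_distance subspace_B_P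
    by (intro dim_image_eq[OF linear_form_distance]) (simp add: span_eq_iff[THEN iffD2])
  finally show ?thesis
    by (simp add: delaunay_rank_def)
qed

end

theorem mainTheorem2:
  fixes b :: "'n::finite \<Rightarrow> real^'n"
    and vert :: "'v::finite \<Rightarrow> real^'n"
    and v0 :: 'v
    and z :: "'v \<Rightarrow> 'n \<Rightarrow> int"
  assumes basis_indep: "independent (range b)"
    and basis_inj: "inj b"
    and vert_inj: "inj vert"
    and delaunay: "delaunay_polytope_vertices (lattice_of_basis b) (range vert)"
    and generates: "lattice_of_basis b = int_span {u - w | u w. u \<in> range vert \<and> w \<in> range vert}"
    and coords: "\<forall>v. vert v - vert v0 = (\<Sum>i\<in>UNIV. of_int (z v i) *\<^sub>R b i)"
  shows "dim {B :: real^'n^'n. transpose B = B \<and>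
            (\<forall>y::'v \<Rightarrow> int. (\<Sum>v\<in>UNIV. of_int (y v) *\<^sub>R vert v) = 0 \<and> sum y UNIV = 0 \<longrightarrow>
               (\<Sum>i\<in>UNIV. \<Sum>j\<in>UNIV. (\<Sum>v\<in>UNIV. of_int (y v * z v i * z v j)) * B$i$j) = 0)}
         = delaunay_rank vert"
proof -
  obtain c r S where empty: "\<forall>a\<in>lattice_of_basis b. r\<^sup>2 \<le> (norm (a - c))\<^sup>2"
    and sphere: "range vert = {a \<in> lattice_of_basis b. (norm (a - c))\<^sup>2 = r\<^sup>2}"
    and S: "S \<subseteq> range vert" "card S = CARD('n) + 1" "\<not> affine_dependent S"
    using delaunay unfolding delaunay_polytope_vertices_def by blast
  have coords': "vert v - vert v0 = (\<Sum>i\<in>UNIV. (\<chi> i. real_of_int (z v i)) $ i *\<^sub>R b i)" for v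
    using coords by simp
  obtain s0 sg where "invertible ((\<chi> i k. (\<chi> i. real_of_int (z (sg k) i)) $ i
      - (\<chi> i. real_of_int (z s0 i)) $ i) :: real^'n^'n)"
    by (rule invertible_coordinate_differences[OF linear_basis_lincomb coords' S])
  then interpret delaunay_setting b vert v0 z c r s0 sg
    using inj_basis_lincomb[OF basis_indep basis_inj] coords empty sphere
    by unfold_locales auto
  show ?thesis
    using dim_B_P_eq_delaunay_rank unfolding B_P_def .
qed

end
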